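(* Let $0\le\lambda<n$, $1\le p<\infty$ and $f\in L^{p,\lambda}(\mathbb{R}^n)$. Then $$\lim_{N\to\infty}\ \sup_{x\in\mathbb{R}^n}\int_{B(x,1)}|f(y)|^p\,\chi_{\mathbb{R}^n\setminus B(0,N)}(y)\,dy=0$$ holds if and only if, for every fixed $R_0>0$, $$\lim_{N\to\infty}\ \sup_{x\in\mathbb{R}^n}\int_{B(x,r)}|f(y)|^p\,\chi_{\mathbb{R}^n\setminus B(0,N)}(y)\,dy=0$$ uniformly in $r\in(0,R_0]$ (here $N$ ranges over $\mathbb{N}$).
   Context: $B(x,r)$ is the open ball in $\mathbb{R}^n$ with center $x$ and radius $r$, and $\chi_E$ is the characteristic function of $E$. For $1\le p<\infty$ and $0\le\lambda\le n$, the homogeneous Morrey space $L^{p,\lambda}(\mathbb{R}^n)$ is the space of $f\in L^p_{\mathrm{loc}}(\mathbb{R}^n)$ with $\|f\|_{p,\lambda}:=\sup_{x\in\mathbb{R}^n,\,r>0}\big(r^{-\lambda}\int_{B(x,r)}|f(y)|^p\,dy\big)^{1/p}<\infty$. *)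

theory Defs
  imports "HOL-Analysis.Analysis"
begin

definition Lp_loc :: "real \<Rightarrow> ('a::euclidean_space \<Rightarrow> real) \<Rightarrow> bool" where
  "Lp_loc p f \<longleftrightarrow> f \<in> borel_measurable lebesgue \<and>
     (\<forall>K. compact K \<longrightarrow> set_integrable lebesgue K (\<lambda>y. \<bar>f y\<bar> powr p))"

definition morrey_space :: "real \<Rightarrow> real \<Rightarrow> ('a::euclidean_space \<Rightarrow> real) set" where
  "morrey_space p lam = {f. Lp_loc p f \<and>
     bdd_above {(r powr (-lam) * (LINT y:ball x r|lebesgue. \<bar>f y\<bar> powr p)) powr (1/p)
                 | x r. r > 0}}"

definition tail_int :: "real \<Rightarrow> ('a::euclidean_space \<Rightarrow> real) \<Rightarrow> 'a \<Rightarrow> real \<Rightarrow> nat \<Rightarrow> real" where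
  "tail_int p f x r N =
     (LINT y:ball x r|lebesgue. \<bar>f y\<bar> powr p * indicator (UNIV - ball 0 (real N)) y)"

end

theory Submission
  imports Defs
begin

text \<open>A ball of radius at most \<open>R\<^sub>0\<close> is covered by a fixed finite number \<open>K\<close> of translates of the
  unit ball, so every truncated integral over \<open>B(x,r)\<close>, \<open>r \<le> R\<^sub>0\<close>, is at most \<open>K\<close> times the
  supremum of the truncated integrals over unit balls; the Morrey condition only serves to make
  these suprema finite. The converse direction is the special case \<open>r = 1\<close>.\<close>

lemma Lp_loc_set_integrable_ball:
  fixes f :: "'a::euclidean_space \<Rightarrow> real"
  assumes "Lp_loc p f"
  shows "set_integrable lebesgue (ball z s) (\<lambda>y. \<bar>f y\<bar> powr p)"
proof -
  have "set_integrable lebesgue (cball z s) (\<lambda>y. \<bar>f y\<bar> powr p)"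
    using assms unfolding Lp_loc_def by auto
  then show ?thesis
    by (rule set_integrable_subset) auto
qed

lemma Lp_loc_integrable_tail:
  fixes f :: "'a::euclidean_space \<Rightarrow> real"
  assumes "Lp_loc p f"
  shows "integrable lebesgue
           (\<lambda>y. indicator (ball z s) y * (\<bar>f y\<bar> powr p * indicator (UNIV - ball 0 (real N)) y))"
proof -
  have "integrable lebesgue (\<lambda>y. indicator (ball z s) y * \<bar>f y\<bar> powr p)"
    using Lp_loc_set_integrable_ball[OF assms] unfolding set_integrable_def by simp
  then have "integrable lebesgue (\<lambda>y. indicator (UNIV - ball 0 (real N)) y *\<^sub>R
                                         (indicator (ball z s) y * \<bar>f y\<bar> powr p))"
    by (rule integrable_mult_indicator[rotated]) auto
  then show ?thesis
    by (simp add: mult_ac)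
qed

lemma tail_int_nonneg: "0 \<le> tail_int p f x r N"
  unfolding tail_int_def set_lebesgue_integral_def
  by (intro Bochner_Integration.integral_nonneg) (auto simp: indicator_def)

lemma tail_int_le_ball_integral:
  fixes f :: "'a::euclidean_space \<Rightarrow> real"
  assumes "Lp_loc p f"
  shows "tail_int p f x r N \<le> (LINT y:ball x r|lebesgue. \<bar>f y\<bar> powr p)"
  unfolding tail_int_def set_lebesgue_integral_def
  using Lp_loc_integrable_tail[OF assms, of x r N] Lp_loc_set_integrable_ball[OF assms, of x r]
  by (intro integral_mono) (auto simp: indicator_def set_integrable_def)

lemma tail_int_le_sum_cover:
  fixes f :: "'a::euclidean_space \<Rightarrow> real"
  assumes "Lp_loc p f" "finite C" "ball x r \<subseteq> (\<Union>c\<in>C. ball (x + c) 1)"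
  shows "tail_int p f x r N \<le> (\<Sum>c\<in>C. tail_int p f (x + c) 1 N)"
proof -
  let ?g = "\<lambda>y. \<bar>f y\<bar> powr p * indicator (UNIV - ball 0 (real N)) y"
  have g_nonneg: "0 \<le> ?g y" for y
    by (auto simp: indicator_def)
  have pointwise: "indicator (ball x r) y * ?g y \<le> (\<Sum>c\<in>C. indicator (ball (x + c) 1) y * ?g y)"
    for y
  proof (cases "y \<in> ball x r")
    case True
    then obtain c where c: "c \<in> C" "y \<in> ball (x + c) 1"
      using assms(3) by blast
    have "indicator (ball x r) y * ?g y = indicator (ball (x + c) 1) y * ?g y"
      using True c by simp
    also have "\<dots> \<le> (\<Sum>c\<in>C. indicator (ball (x + c) 1) y * ?g y)"
      using c(1) g_nonneg assms(2) by (intro member_le_sum) (auto simp: indicator_def)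
    finally show ?thesis .
  next
    case False
    then show ?thesis
      using g_nonneg by (simp add: sum_nonneg)
  qed
  have "tail_int p f x r N = integral\<^sup>L lebesgue (\<lambda>y. indicator (ball x r) y * ?g y)"
    unfolding tail_int_def set_lebesgue_integral_def by simp
  also have "\<dots> \<le> integral\<^sup>L lebesgue (\<lambda>y. \<Sum>c\<in>C. indicator (ball (x + c) 1) y * ?g y)"
    using pointwise Lp_loc_integrable_tail[OF assms(1)]
    by (intro integral_mono Bochner_Integration.integrable_sum) auto
  also have "\<dots> = (\<Sum>c\<in>C. integral\<^sup>L lebesgue (\<lambda>y. indicator (ball (x + c) 1) y * ?g y))"
    by (intro Bochner_Integration.integral_sum Lp_loc_integrable_tail[OF assms(1)])
  also have "\<dots> = (\<Sum>c\<in>C. tail_int p f (x + c) 1 N)"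
    unfolding tail_int_def set_lebesgue_integral_def by simp
  finally show ?thesis .
qed

lemma finite_translate_cover_ball:
  fixes R :: real and e :: real
  assumes "e > 0"
  obtains C :: "'a::euclidean_space set"
  where "finite C" "\<And>x r. r \<le> R \<Longrightarrow> ball x r \<subseteq> (\<Union>c\<in>C. ball (x + c) e)"
proof -
  have "cball (0::'a) R \<subseteq> (\<Union>c\<in>cball 0 R. ball c e)"
    using assms by force
  then obtain C where C: "finite C" "cball (0::'a) R \<subseteq> (\<Union>c\<in>C. ball c e)"
    by (metis compactE_image compact_cball open_ball)
  have "ball x r \<subseteq> (\<Union>c\<in>C. ball (x + c) e)" if "r \<le> R" for x r
  proof
    fix y assume "y \<in> ball x r"
    then have "y - x \<in> cball 0 R"
      using that by (auto simp: dist_norm norm_minus_commute)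
    then obtain c where "c \<in> C" "y - x \<in> ball c e"
      using C(2) by blast
    then show "y \<in> (\<Union>c\<in>C. ball (x + c) e)"
      by (auto simp: dist_norm algebra_simps)
  qed
  with C(1) show thesis
    using that by blast
qed

lemma morrey_space_ball_integral_bounded:
  fixes f :: "'a::euclidean_space \<Rightarrow> real"
  assumes "f \<in> morrey_space p lam" "p > 0" "r > 0"
  obtains M where "\<And>x. (LINT y:ball x r|lebesgue. \<bar>f y\<bar> powr p) \<le> M"
proof -
  obtain B where B: "\<And>x. (r powr (-lam) * (LINT y:ball x r|lebesgue. \<bar>f y\<bar> powr p)) powr (1/p) \<le> B"
    using assms(1,3) unfolding morrey_space_def bdd_above_def by blast
  have "(LINT y:ball x r|lebesgue. \<bar>f y\<bar> powr p) \<le> r powr lam * B powr p" for x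
  proof -
    let ?I = "LINT y:ball x r|lebesgue. \<bar>f y\<bar> powr p"
    have "0 \<le> ?I"
      unfolding set_lebesgue_integral_def by (intro Bochner_Integration.integral_nonneg) auto
    then have "r powr (-lam) * ?I = ((r powr (-lam) * ?I) powr (1/p)) powr p"
      using assms(2) by (simp add: powr_powr)
    also have "\<dots> \<le> B powr p"
      using B[of x] assms(2) by (intro powr_mono2) auto
    finally show ?thesis
      using assms(3) by (simp add: powr_minus field_simps)
  qed
  then show thesis
    using that by blast
qed

lemma bdd_above_tail_int:
  fixes f :: "'a::euclidean_space \<Rightarrow> real"
  assumes "f \<in> morrey_space p lam" "p > 0" "r > 0"
  shows "bdd_above (range (\<lambda>x. tail_int p f x r N))"
proof -
  obtain M where "\<And>x. (LINT y:ball x r|lebesgue. \<bar>f y\<bar> powr p) \<le> M"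
    using morrey_space_ball_integral_bounded[OF assms] by blast
  moreover have "Lp_loc p f"
    using assms(1) unfolding morrey_space_def by simp
  ultimately show ?thesis
    using tail_int_le_ball_integral by (metis bdd_aboveI2 order_trans)
qed

lemma SUP_tail_int_le_mult_unit_radius:
  fixes f :: "'a::euclidean_space \<Rightarrow> real"
  assumes "f \<in> morrey_space p lam" "p > 0"
  obtains K where "\<And>r N. r \<le> R \<Longrightarrow> (SUP x. tail_int p f x r N) \<le> K * (SUP x. tail_int p f x 1 N)"
proof -
  obtain C :: "'a set" where C: "finite C" "\<And>x r. r \<le> R \<Longrightarrow> ball x r \<subseteq> (\<Union>c\<in>C. ball (x + c) 1)"
    using finite_translate_cover_ball[of 1 R] by auto
  have Lp: "Lp_loc p f"
    using assms(1) unfolding morrey_space_def by simp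
  have "(SUP x. tail_int p f x r N) \<le> card C * (SUP x. tail_int p f x 1 N)" if "r \<le> R" for r N
  proof (rule cSUP_least)
    fix x
    have "tail_int p f x r N \<le> (\<Sum>c\<in>C. tail_int p f (x + c) 1 N)"
      using tail_int_le_sum_cover[OF Lp C(1) C(2)[OF that]] .
    also have "\<dots> \<le> (\<Sum>c\<in>C. SUP x. tail_int p f x 1 N)"
      using bdd_above_tail_int[OF assms] by (intro sum_mono cSUP_upper) auto
    finally show "tail_int p f x r N \<le> card C * (SUP x. tail_int p f x 1 N)"
      by simp
  qed simp
  then show thesis
    using that[of "card C"] by simp
qed

lemma uniform_limit_zero_if_dominated:
  fixes g :: "nat \<Rightarrow> 'b \<Rightarrow> real"
  assumes "\<And>N r. r \<in> S \<Longrightarrow> \<bar>g N r\<bar> \<le> K * h N" and "h \<longlonglongrightarrow> 0"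
  shows "uniform_limit S g (\<lambda>_. 0) sequentially"
  unfolding uniform_limit_iff
proof (intro allI impI)
  fix e :: real
  assume "e > 0"
  have "(\<lambda>N. K * h N) \<longlonglongrightarrow> 0"
    using tendsto_mult_right_zero[OF assms(2)] .
  then have "\<forall>\<^sub>F N in sequentially. K * h N < e"
    using \<open>e > 0\<close> by (rule order_tendstoD)
  then show "\<forall>\<^sub>F N in sequentially. \<forall>r\<in>S. dist (g N r) 0 < e"
  proof (rule eventually_mono)
    fix N
    assume "K * h N < e"
    then show "\<forall>r\<in>S. dist (g N r) 0 < e"
      using assms(1)[of _ N] by (auto simp: dist_real_def intro: le_less_trans)
  qed
qed

theorem lemma3p4:
  fixes f :: "'a::euclidean_space \<Rightarrow> real" and p lam :: real
  assumes "0 \<le> lam" and "lam < real DIM('a)" and "1 \<le> p"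
    and "f \<in> morrey_space p lam"
  shows "((\<lambda>N. SUP x. tail_int p f x 1 N) \<longlonglongrightarrow> 0) \<longleftrightarrow>
         (\<forall>R0>0. uniform_limit {0<..R0} (\<lambda>N r. SUP x. tail_int p f x r N) (\<lambda>r. 0) sequentially)"
proof
  assume lim: "(\<lambda>N. SUP x. tail_int p f x 1 N) \<longlonglongrightarrow> 0"
  have "p > 0"
    using assms(3) by simp
  show "\<forall>R0>0. uniform_limit {0<..R0} (\<lambda>N r. SUP x. tail_int p f x r N) (\<lambda>r. 0) sequentially"
  proof (intro allI impI)
    fix R0 :: real
    obtain K where K: "\<And>r N. r \<le> R0 \<Longrightarrow> (SUP x. tail_int p f x r N) \<le> K * (SUP x. tail_int p f x 1 N)"
      using SUP_tail_int_le_mult_unit_radius[OF assms(4) \<open>p > 0\<close>] by metis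
    have "0 \<le> (SUP x. tail_int p f x r N)" if "r > 0" for r N
      using cSUP_upper[OF UNIV_I bdd_above_tail_int[OF assms(4) \<open>p > 0\<close> that]] tail_int_nonneg
      by (metis order_trans)
    with K show "uniform_limit {0<..R0} (\<lambda>N r. SUP x. tail_int p f x r N) (\<lambda>r. 0) sequentially"
      by (intro uniform_limit_zero_if_dominated[OF _ lim]) auto
  qed
next
  assume "\<forall>R0>0. uniform_limit {0<..R0} (\<lambda>N r. SUP x. tail_int p f x r N) (\<lambda>r. 0) sequentially"
  then have "uniform_limit {0<..1} (\<lambda>N r. SUP x. tail_int p f x r N) (\<lambda>r. 0) sequentially"
    by simp
  then show "(\<lambda>N. SUP x. tail_int p f x 1 N) \<longlonglongrightarrow> 0"
    by (rule tendsto_uniform_limitI) simp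
qed

end
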